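(* For every $N$-relay FD 1-2-1 network with graph $G=([0:N+1],E)$ and positive rational link capacities as in the context, assuming $\mathcal P\neq\emptyset$, there exists a path $p\in\mathcal P$ with $\mathsf C_p\ge\frac{1}{2N+2}\mathsf{C}_{\rm cs,iid}$, where $\mathsf{C}_{\rm cs,iid}$ is computed with FD states.
   Context: Nodes are $[0:N+1]$; node $0$ is the source, $N+1$ the destination, $[1:N]$ relays. $E\subseteq\{(i,j): i\in[0:N],\ j\in[1:N+1],\ i\ne j\}$ is a set of directed links; each $(i,j)\in E$ has a positive rational capacity $\ell_{j,i}$, and $\ell_{j,i}=0$ for $(i,j)\notin E$. FD network states: a state $s$ consists of sets $s_{i,t}\subseteq[1:N+1]\setminus\{i\}$ and $s_{i,r}\subseteq[0:N]\setminus\{i\}$, each of cardinality at most $1$, for $i\in[0:N+1]$, with $s_{0,r}=s_{N+1,t}=\emptyset$; $\mathcal S$ is the set of all states. Link $(i,j)$ is active in $s$ if $j\in s_{i,t}$ and $i\in s_{j,r}$. $\mathsf{C}_{\rm cs,iid}=\max_{\lambda}\min_{\Omega}\sum_{i\in\Omega,\ j\in\Omega^c}\big(\sum_{s\in\mathcal S:\ (i,j)\text{ active in }s}\lambda_s\big)\ell_{j,i}$, maximum over probability vectors $(\lambda_s)_{s\in\mathcal S}$, minimum over $\Omega$ with $0\in\Omega\subseteq[0:N]$, $\Omega^c=[0:N+1]\setminus\Omega$. $\mathcal P$ is the set of all directed paths of distinct nodes from $0$ to $N+1$ using links of $E$; $\mathsf C_p=\min_{(i,j)\text{ consecutive on }p}\ell_{j,i}$.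 *)

theory Defs
  imports Complex_Main
begin

text \<open>Nodes are natural numbers 0..N+1. A FD state is a pair (st, sr) of functions
  giving, for each node i, its transmit set st i and receive set sr i.
  Outside [0:N+1] both sets are required to be empty (so the state set is finite).\<close>

type_synonym fdstate = "(nat \<Rightarrow> nat set) \<times> (nat \<Rightarrow> nat set)"

definition fd_states :: "nat \<Rightarrow> fdstate set" where
  "fd_states N = {(st, sr).
     (\<forall>i. i \<le> N + 1 \<longrightarrow>
        st i \<subseteq> {1..N+1} - {i} \<and> card (st i) \<le> 1 \<and>
        sr i \<subseteq> {0..N} - {i} \<and> card (sr i) \<le> 1) \<and>
     (\<forall>i. i > N + 1 \<longrightarrow> st i = {} \<and> sr i = {}) \<and>
     sr 0 = {} \<and> st (N + 1) = {}}"

definition link_active :: "fdstate \<Rightarrow> nat \<Rightarrow> nat \<Rightarrow> bool" where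
  "link_active s i j \<longleftrightarrow> j \<in> fst s i \<and> i \<in> snd s j"

definition prob_vectors :: "nat \<Rightarrow> (fdstate \<Rightarrow> real) set" where
  "prob_vectors N = {lam. (\<forall>s\<in>fd_states N. lam s \<ge> 0) \<and> (\<Sum>s\<in>fd_states N. lam s) = 1}"

text \<open>Value of the cut \<Omega> under schedule lam; capacities l j i = \<ell>_{j,i} for link (i,j).\<close>
definition cut_value :: "nat \<Rightarrow> (nat \<Rightarrow> nat \<Rightarrow> real) \<Rightarrow> (fdstate \<Rightarrow> real) \<Rightarrow> nat set \<Rightarrow> real" where
  "cut_value N l lam \<Omega> =
     (\<Sum>i\<in>\<Omega>. \<Sum>j\<in>{0..N+1} - \<Omega>.
        (\<Sum>s\<in>{s\<in>fd_states N. link_active s i j}. lam s) * l j i)"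

definition cuts :: "nat \<Rightarrow> nat set set" where
  "cuts N = {\<Omega>. 0 \<in> \<Omega> \<and> \<Omega> \<subseteq> {0..N}}"

text \<open>C_cs,iid = max over lam of min over cuts (the max is attained; written as Sup).\<close>
definition C_cs_iid :: "nat \<Rightarrow> (nat \<Rightarrow> nat \<Rightarrow> real) \<Rightarrow> real" where
  "C_cs_iid N l = (SUP lam\<in>prob_vectors N. Min (cut_value N l lam ` cuts N))"

definition paths :: "nat \<Rightarrow> (nat \<times> nat) set \<Rightarrow> nat list set" where
  "paths N E = {p. p \<noteq> [] \<and> distinct p \<and> hd p = 0 \<and> last p = N + 1 \<and>
                   (\<forall>k. Suc k < length p \<longrightarrow> (p ! k, p ! Suc k) \<in> E)}"

definition path_cap :: "(nat \<Rightarrow> nat \<Rightarrow> real) \<Rightarrow> nat list \<Rightarrow> real" where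
  "path_cap l p = Min {l (p ! Suc k) (p ! k) | k. Suc k < length p}"

end

theory Submission
  imports Defs "HOL-Library.FuncSet"
begin

text \<open>If every path has a link of capacity below \<open>t > 0\<close>, the nodes reachable from the source
  through links of capacity at least \<open>t\<close> form a cut all of whose crossing links have capacity
  below \<open>t\<close>. In every FD state each node transmits on at most one link, so the value of this cut
  under any schedule is at most \<open>(N + 1) t\<close>. Hence \<open>C_cs_iid \<le> (N + 1) t\<close>, and taking
  \<open>t = C_cs_iid / (2N + 2)\<close> gives a contradiction unless some path has capacity at least \<open>t\<close>.\<close>

lemma finite_fd_states: "finite (fd_states N)"
proof -
  let ?A = "{0..N+1}"
  let ?P = "PiE ?A (\<lambda>_. Pow ?A)"
  let ?ext = "\<lambda>a :: nat \<Rightarrow> nat set. \<lambda>i. if i \<le> N + 1 then a i else {}"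
  have "fd_states N \<subseteq> (\<lambda>(a, b). (?ext a, ?ext b)) ` (?P \<times> ?P)"
  proof
    fix s assume s: "s \<in> fd_states N"
    obtain st sr where st_sr: "s = (st, sr)" by (cases s)
    have "s = (?ext (restrict st ?A), ?ext (restrict sr ?A))"
      using s st_sr by (auto simp: fd_states_def fun_eq_iff not_le)
    moreover have "(restrict st ?A, restrict sr ?A) \<in> ?P \<times> ?P"
      using s st_sr by (fastforce simp: fd_states_def)
    ultimately show "s \<in> (\<lambda>(a, b). (?ext a, ?ext b)) ` (?P \<times> ?P)" by force
  qed
  then show ?thesis by (rule finite_subset) (simp add: finite_PiE)
qed

lemma prob_vectors_nonempty: "prob_vectors N \<noteq> {}"
proof -
  define silent :: fdstate where "silent = (\<lambda>_. {}, \<lambda>_. {})"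
  have "silent \<in> fd_states N" by (simp add: fd_states_def silent_def)
  then have "(\<lambda>s. if s = silent then 1 else 0) \<in> prob_vectors N"
    using finite_fd_states[of N] by (simp add: prob_vectors_def sum.delta)
  then show ?thesis by blast
qed

lemma card_active_out_links_le_one:
  assumes "s \<in> fd_states N"
  shows "card {j \<in> J. link_active s i j} \<le> 1"
proof -
  have "finite (fst s i) \<and> card (fst s i) \<le> 1"
    using assms by (cases s, cases "i \<le> N + 1") (auto simp: fd_states_def intro: finite_subset)
  moreover have "{j \<in> J. link_active s i j} \<subseteq> fst s i" by (auto simp: link_active_def)
  ultimately show ?thesis by (meson card_mono le_trans)
qed

lemma cut_value_le:
  assumes lam: "lam \<in> prob_vectors N" and t: "t \<ge> 0"
    and crossing: "\<forall>i\<in>\<Omega>. \<forall>j\<in>{0..N+1} - \<Omega>. l j i \<le> t"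
  shows "cut_value N l lam \<Omega> \<le> t * card \<Omega>"
proof -
  let ?F = "fd_states N" and ?J = "{0..N+1} - \<Omega>"
  have lam_nonneg: "\<forall>s\<in>?F. lam s \<ge> 0" and lam_sum: "sum lam ?F = 1"
    using lam by (auto simp: prob_vectors_def)
  have out_le: "(\<Sum>j\<in>?J. if link_active s i j then lam s else 0) \<le> lam s" if "s \<in> ?F" for s i
  proof -
    have "(\<Sum>j\<in>?J. if link_active s i j then lam s else 0) = card {j \<in> ?J. link_active s i j} * lam s"
      by (simp add: sum.inter_filter[symmetric])
    also have "\<dots> \<le> 1 * lam s"
      using card_active_out_links_le_one[OF that, of ?J i] lam_nonneg that
      by (intro mult_right_mono) auto
    finally show ?thesis by simp
  qed
  have "cut_value N l lam \<Omega> \<le> (\<Sum>i\<in>\<Omega>. \<Sum>j\<in>?J. (\<Sum>s\<in>{s\<in>?F. link_active s i j}. lam s) * t)"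
    unfolding cut_value_def
    using crossing lam_nonneg by (intro sum_mono mult_left_mono sum_nonneg) auto
  also have "\<dots> = t * (\<Sum>i\<in>\<Omega>. \<Sum>j\<in>?J. \<Sum>s\<in>?F. if link_active s i j then lam s else 0)"
    by (simp add: sum_distrib_left sum.inter_filter[OF finite_fd_states] mult.commute)
  also have "\<dots> = t * (\<Sum>i\<in>\<Omega>. \<Sum>s\<in>?F. \<Sum>j\<in>?J. if link_active s i j then lam s else 0)"
    by (intro arg_cong[where f="(*) t"] sum.cong refl sum.swap)
  also have "\<dots> \<le> t * (\<Sum>i\<in>\<Omega>. \<Sum>s\<in>?F. lam s)"
    using out_le t by (intro mult_left_mono sum_mono) auto
  also have "\<dots> = t * card \<Omega>" using lam_sum by simp
  finally show ?thesis .
qed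

lemma C_cs_iid_le_cut:
  assumes \<Omega>: "\<Omega> \<in> cuts N" and t: "t \<ge> 0"
    and crossing: "\<forall>i\<in>\<Omega>. \<forall>j\<in>{0..N+1} - \<Omega>. l j i \<le> t"
  shows "C_cs_iid N l \<le> (real N + 1) * t"
  unfolding C_cs_iid_def
proof (rule cSUP_least[OF prob_vectors_nonempty])
  fix lam assume lam: "lam \<in> prob_vectors N"
  have "finite (cuts N)" by (rule finite_subset[of _ "Pow {0..N}"]) (auto simp: cuts_def)
  then have "Min (cut_value N l lam ` cuts N) \<le> cut_value N l lam \<Omega>"
    using \<Omega> by (intro Min_le) auto
  also have "\<dots> \<le> t * card \<Omega>" using cut_value_le[OF lam t crossing] .
  also have "\<dots> \<le> t * (real N + 1)"
  proof -
    have "card \<Omega> \<le> card {0..N}" using \<Omega> by (intro card_mono) (auto simp: cuts_def)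
    then show ?thesis using t by (intro mult_left_mono) auto
  qed
  finally show "Min (cut_value N l lam ` cuts N) \<le> (real N + 1) * t" by (simp add: mult.commute)
qed

definition wide_path :: "(nat \<times> nat) set \<Rightarrow> (nat \<Rightarrow> nat \<Rightarrow> real) \<Rightarrow> real \<Rightarrow> nat list \<Rightarrow> bool" where
  "wide_path E l t q \<longleftrightarrow> q \<noteq> [] \<and> distinct q \<and> hd q = 0 \<and>
     (\<forall>k. Suc k < length q \<longrightarrow> (q ! k, q ! Suc k) \<in> E \<and> t \<le> l (q ! Suc k) (q ! k))"

lemma wide_path_take:
  assumes "wide_path E l t q" "m < length q"
  shows "wide_path E l t (take (Suc m) q)" "last (take (Suc m) q) = q ! m"
  using assms unfolding wide_path_def
  by (auto simp: last_conv_nth hd_conv_nth min_def intro!: arg_cong[where f="(!) q"])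

lemma wide_path_snoc:
  assumes q: "wide_path E l t q" and j: "j \<notin> set q"
    and link: "(last q, j) \<in> E" and wide: "t \<le> l j (last q)"
  shows "wide_path E l t (q @ [j])"
proof -
  have "((q @ [j]) ! k, (q @ [j]) ! Suc k) \<in> E \<and> t \<le> l ((q @ [j]) ! Suc k) ((q @ [j]) ! k)"
    if k: "Suc k < length (q @ [j])" for k
  proof (cases "Suc k < length q")
    case True
    then show ?thesis using q by (simp add: wide_path_def nth_append)
  next
    case False
    then have "Suc k = length q" using k by simp
    moreover from this have "q ! k = last q" by (metis diff_Suc_1 last_conv_nth list.size(3) nat.distinct(1))
    ultimately show ?thesis using link wide by (simp add: nth_append)
  qed
  then show ?thesis using q j unfolding wide_path_def by simp
qed

lemma last_wide_path:
  assumes "wide_path E l t q"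
  shows "last q = 0 \<or> (\<exists>i. (i, last q) \<in> E)"
proof (cases "length q = 1")
  case True
  then show ?thesis using assms by (cases q) (auto simp: wide_path_def)
next
  case False
  then have "Suc (length q - 2) < length q" "Suc (length q - 2) = length q - 1"
    using assms by (auto simp: wide_path_def) (cases q; auto)+
  then have "(q ! (length q - 2), q ! (length q - 1)) \<in> E" using assms by (metis wide_path_def)
  then show ?thesis using assms by (auto simp: wide_path_def last_conv_nth)
qed

lemma path_cap_attained:
  assumes "p \<in> paths N E"
  shows "\<exists>k. Suc k < length p \<and> path_cap l p = l (p ! Suc k) (p ! k)"
proof -
  let ?S = "{l (p ! Suc k) (p ! k) | k. Suc k < length p}"
  have "Suc 0 < length p"
    using assms by (cases p rule: remdups_adj.cases) (auto simp: paths_def)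
  then have "?S \<noteq> {}" by blast
  moreover have "finite ?S"
    by (rule finite_image_set, rule finite_subset[of _ "{..<length p}"]) auto
  ultimately have "Min ?S \<in> ?S" by (rule Min_in[rotated])
  then show ?thesis unfolding path_cap_def by blast
qed

lemma wide_path_to_destination:
  assumes "wide_path E l t q" "last q = N + 1"
  shows "q \<in> paths N E" "t \<le> path_cap l q"
proof -
  show p: "q \<in> paths N E" using assms by (auto simp: wide_path_def paths_def)
  obtain k where "Suc k < length q" "path_cap l q = l (q ! Suc k) (q ! k)"
    using path_cap_attained[OF p] by blast
  then show "t \<le> path_cap l q" using assms(1) by (simp add: wide_path_def)
qed

lemma bottleneck_cut:
  assumes E_sub: "E \<subseteq> {(i, j). i \<le> N \<and> 1 \<le> j \<and> j \<le> N + 1 \<and> i \<noteq> j}"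
    and no_wide_path: "\<forall>p\<in>paths N E. path_cap l p < t"
  shows "\<exists>\<Omega>\<in>cuts N. \<forall>i\<in>\<Omega>. \<forall>j\<in>{0..N+1} - \<Omega>. (i, j) \<in> E \<longrightarrow> l j i < t"
proof -
  define R where "R = {i. \<exists>q. wide_path E l t q \<and> last q = i}"
  have "wide_path E l t [0]" by (simp add: wide_path_def)
  then have "0 \<in> R" unfolding R_def by force
  moreover have "R \<subseteq> {0..N}"
  proof
    fix i assume "i \<in> R"
    then obtain q where q: "wide_path E l t q" "last q = i" unfolding R_def by blast
    have "i \<noteq> N + 1"
    proof
      assume "i = N + 1"
      then have "q \<in> paths N E" "t \<le> path_cap l q"
        using wide_path_to_destination[OF q(1)] q(2) by auto
      then show False using no_wide_path by fastforce
    qed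
    moreover have "i \<le> N + 1" using last_wide_path[OF q(1)] q(2) E_sub by auto
    ultimately show "i \<in> {0..N}" by simp
  qed
  moreover have "l j i < t" if i: "i \<in> R" and j: "j \<in> {0..N+1} - R" and link: "(i, j) \<in> E" for i j
  proof (rule ccontr)
    assume "\<not> l j i < t"
    obtain q where q: "wide_path E l t q" "last q = i" using i unfolding R_def by blast
    have "j \<in> R"
    proof (cases "j \<in> set q")
      case True
      then obtain m where m: "m < length q" "q ! m = j" by (auto simp: in_set_conv_nth)
      show ?thesis using wide_path_take[OF q(1) m(1)] m(2) unfolding R_def by blast
    next
      case False
      have "wide_path E l t (q @ [j])"
        using wide_path_snoc[OF q(1) False] q(2) link \<open>\<not> l j i < t\<close> by simp
      then show ?thesis unfolding R_def by force
    qed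
    then show False using j by simp
  qed
  ultimately show ?thesis unfolding cuts_def by blast
qed

theorem lemma3:
  fixes N :: nat and E :: "(nat \<times> nat) set" and l :: "nat \<Rightarrow> nat \<Rightarrow> real"
  assumes E_sub: "E \<subseteq> {(i, j). i \<le> N \<and> 1 \<le> j \<and> j \<le> N + 1 \<and> i \<noteq> j}"
    and cap_pos: "\<forall>(i, j)\<in>E. l j i > 0 \<and> l j i \<in> \<rat>"
    and cap_zero: "\<forall>i j. (i, j) \<notin> E \<longrightarrow> l j i = 0"
    and nonempty: "paths N E \<noteq> {}"
  shows "\<exists>p\<in>paths N E. path_cap l p \<ge> C_cs_iid N l / (2 * real N + 2)"
proof (rule ccontr)
  define t where "t = C_cs_iid N l / (2 * real N + 2)"
  assume "\<not> ?thesis"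
  then have no_wide_path: "\<forall>p\<in>paths N E. path_cap l p < t" by (auto simp: t_def not_le)
  obtain p where p: "p \<in> paths N E" using nonempty by blast
  obtain k where k: "Suc k < length p" "path_cap l p = l (p ! Suc k) (p ! k)"
    using path_cap_attained[OF p] by blast
  have "(p ! k, p ! Suc k) \<in> E" using p k(1) by (simp add: paths_def)
  then have "0 < path_cap l p" using cap_pos k(2) by auto
  then have t_pos: "0 < t" using no_wide_path p by fastforce
  obtain \<Omega> where \<Omega>: "\<Omega> \<in> cuts N" and "\<forall>i\<in>\<Omega>. \<forall>j\<in>{0..N+1} - \<Omega>. (i, j) \<in> E \<longrightarrow> l j i < t"
    using bottleneck_cut[OF E_sub no_wide_path] by blast
  then have "\<forall>i\<in>\<Omega>. \<forall>j\<in>{0..N+1} - \<Omega>. l j i \<le> t" using cap_zero t_pos by (metis less_imp_le)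
  then have "C_cs_iid N l \<le> (real N + 1) * t" using C_cs_iid_le_cut[OF \<Omega>] t_pos by simp
  also have "\<dots> = C_cs_iid N l / 2" by (simp add: t_def field_simps)
  finally show False using t_pos by (simp add: t_def zero_less_divide_iff)
qed

end
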